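(* Let $G=(V,E)$ be a connected graph, let $T$ be a spanning tree of $G$ rooted in $s$ which is an $\mathcal L$-tree of some DFS on $G$, let $\rho$ be an arbitrary vertex order of $V$ ending with $s$, and let $\sigma$ be the order output by Ordering$(G,T,s,\rho)$. Let $v,w$ be vertices with $v\prec_\sigma w$ which have the same parent in $T$ and the same neighborhood in the set $Y=\{x\in V: x\prec_\sigma v\}$. Then $v$ is to the right of $w$ in $\rho$.
   Context: Graphs are finite, simple, undirected; $N(v)$ is the neighborhood of $v$. A vertex order is a linear order $\sigma=(v_1,\dots,v_n)$ of $V$; $\sigma(i)=v_i$; $u\prec_\sigma v$ means $u$ appears before (to the left of) $v$; $\rho^-$ is the reverse of $\rho$. DFS: a search that starts at a vertex and repeatedly visits an unvisited neighbor of the most recently visited vertex that still has an unvisited neighbor. DFS$^+(\tau)$ on a graph $H$: the DFS of $H$ starting at the last vertex of $\tau$ that, whenever several vertices may be visited next, visits the one rightmost in $\tau$. $\mathcal L$-tree of a vertex order $(v_1,\dots,v_n)$: the spanning tree rooted at $v_1$ with an edge from each $v_i$ ($i>1$) to its rightmost neighbor $v_j$ with $j<i$; $T$ rooted at $s$ is an $\mathcal L$-tree of DFS on $G$ if some DFS order of $G$ starting at $s$ has $\mathcal L$-tree $T$. Refining an ordered partition $(Q_1,\dots,Q_k)$ of $V$ with $S'$ replaces each $Q_i$ by $(Q_i\cap S',Q_i\setminus S')$ whenever both are nonempty. Procedure Ordering$(G,T,s,\rho)$: let $\beta$ be the reverse of a BFS order of $T$ starting at $s$; $\mathcal Q=(V)$;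 for $i=1,\dots,n$, with $v=\beta(i)$, refine $\mathcal Q$ with $\{w\in N(v): w\prec_\beta v\}$; order the vertices inside each class of $\mathcal Q$ according to $\rho^-$ and move $\{s\}$ to the leftmost position; let $\tau$ be the reverse of the resulting order of all vertices; output $\sigma=$ DFS$^+(\tau)$ on $T$. *)

theory Defs
  imports Main
begin

definition simple_graph :: "'a set \<Rightarrow> ('a \<Rightarrow> 'a \<Rightarrow> bool) \<Rightarrow> bool" where
  "simple_graph V E \<longleftrightarrow> finite V \<and> (\<forall>x y. E x y \<longrightarrow> x \<in> V \<and> y \<in> V)
     \<and> (\<forall>x y. E x y \<longrightarrow> E y x) \<and> (\<forall>x. \<not> E x x)"

definition connected_graph :: "'a set \<Rightarrow> ('a \<Rightarrow> 'a \<Rightarrow> bool) \<Rightarrow> bool" where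
  "connected_graph V E \<longleftrightarrow> (\<forall>x\<in>V. \<forall>y\<in>V. E\<^sup>*\<^sup>* x y)"

definition vertex_order :: "'a set \<Rightarrow> 'a list \<Rightarrow> bool" where
  "vertex_order V xs \<longleftrightarrow> distinct xs \<and> set xs = V"

definition prec :: "'a list \<Rightarrow> 'a \<Rightarrow> 'a \<Rightarrow> bool" where
  "prec xs u v \<longleftrightarrow> (\<exists>i j. i < j \<and> j < length xs \<and> xs ! i = u \<and> xs ! j = v)"

definition pos :: "'a list \<Rightarrow> 'a \<Rightarrow> nat" where
  "pos xs v = (LEAST i. i < length xs \<and> xs ! i = v)"

text \<open>DFS order of (V,E) starting at s: each new vertex is an unvisited neighbour of
  sigma!j, where j is the most recently visited vertex that still has an unvisited
  neighbour (all vertices visited after sigma!j have no unvisited neighbour).\<close>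
definition is_dfs_order :: "'a set \<Rightarrow> ('a \<Rightarrow> 'a \<Rightarrow> bool) \<Rightarrow> 'a \<Rightarrow> 'a list \<Rightarrow> bool" where
  "is_dfs_order V E s \<sigma> \<longleftrightarrow> vertex_order V \<sigma> \<and> \<sigma> ! 0 = s \<and>
     (\<forall>i. 0 < i \<and> i < length \<sigma> \<longrightarrow>
        (\<exists>j<i. E (\<sigma> ! j) (\<sigma> ! i) \<and>
           (\<forall>k. j < k \<and> k < i \<longrightarrow> (\<forall>u\<in>V. E (\<sigma> ! k) u \<longrightarrow> u \<in> set (take i \<sigma>)))))"

text \<open>BFS order of (V,E) starting at s: each new vertex is an unvisited neighbour of
  the earliest visited vertex that still has an unvisited neighbour.\<close>
definition is_bfs_order :: "'a set \<Rightarrow> ('a \<Rightarrow> 'a \<Rightarrow> bool) \<Rightarrow> 'a \<Rightarrow> 'a list \<Rightarrow> bool" where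
  "is_bfs_order V E s \<sigma> \<longleftrightarrow> vertex_order V \<sigma> \<and> \<sigma> ! 0 = s \<and>
     (\<forall>i. 0 < i \<and> i < length \<sigma> \<longrightarrow>
        (\<exists>j<i. E (\<sigma> ! j) (\<sigma> ! i) \<and>
           (\<forall>k. k < j \<longrightarrow> (\<forall>u\<in>V. E (\<sigma> ! k) u \<longrightarrow> u \<in> set (take i \<sigma>)))))"

text \<open>sigma = DFS+(tau) on (V,H): the DFS of (V,H) starting at the last vertex of tau
  which, among the admissible next vertices, always takes the rightmost one in tau.
  (This relation determines sigma uniquely.)\<close>
definition dfs_plus :: "'a set \<Rightarrow> ('a \<Rightarrow> 'a \<Rightarrow> bool) \<Rightarrow> 'a list \<Rightarrow> 'a list \<Rightarrow> bool" where
  "dfs_plus V H \<tau> \<sigma> \<longleftrightarrow> vertex_order V \<sigma> \<and> \<sigma> ! 0 = last \<tau> \<and>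
     (\<forall>i. 0 < i \<and> i < length \<sigma> \<longrightarrow>
        (\<exists>j<i. H (\<sigma> ! j) (\<sigma> ! i) \<and>
           (\<forall>k. j < k \<and> k < i \<longrightarrow> (\<forall>u\<in>V. H (\<sigma> ! k) u \<longrightarrow> u \<in> set (take i \<sigma>))) \<and>
           (\<forall>u\<in>V. H (\<sigma> ! j) u \<and> u \<notin> set (take i \<sigma>) \<longrightarrow> u = \<sigma> ! i \<or> prec \<tau> u (\<sigma> ! i))))"

text \<open>In the L-tree of pi, the parent of a non-first vertex v is its rightmost
  neighbour to the left of v in pi.\<close>
definition lparent :: "('a \<Rightarrow> 'a \<Rightarrow> bool) \<Rightarrow> 'a list \<Rightarrow> 'a \<Rightarrow> 'a" where
  "lparent E \<pi> v = \<pi> ! (GREATEST j. j < pos \<pi> v \<and> E (\<pi> ! j) v)"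

definition tree_edge :: "'a set \<Rightarrow> 'a \<Rightarrow> ('a \<Rightarrow> 'a) \<Rightarrow> 'a \<Rightarrow> 'a \<Rightarrow> bool" where
  "tree_edge V s p x y \<longleftrightarrow> (x \<in> V - {s} \<and> y = p x) \<or> (y \<in> V - {s} \<and> x = p y)"

definition is_dfs_ltree :: "'a set \<Rightarrow> ('a \<Rightarrow> 'a \<Rightarrow> bool) \<Rightarrow> 'a \<Rightarrow> ('a \<Rightarrow> 'a) \<Rightarrow> bool" where
  "is_dfs_ltree V E s p \<longleftrightarrow>
     (\<exists>\<pi>. is_dfs_order V E s \<pi> \<and> (\<forall>v\<in>V - {s}. p v = lparent E \<pi> v))"

definition refine :: "'a set list \<Rightarrow> 'a set \<Rightarrow> 'a set list" where
  "refine Q S = concat (map (\<lambda>C. if C \<inter> S \<noteq> {} \<and> C - S \<noteq> {} then [C \<inter> S, C - S] else [C]) Q)"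

definition ordering_partition :: "'a set \<Rightarrow> ('a \<Rightarrow> 'a \<Rightarrow> bool) \<Rightarrow> 'a list \<Rightarrow> 'a set list" where
  "ordering_partition V E \<beta> = fold (\<lambda>v Q. refine Q {w. E v w \<and> prec \<beta> w v}) \<beta> [V]"

text \<open>tau: classes in order, vertices inside each class ordered by the reverse of rho,
  s moved to the leftmost position; then the whole order reversed.\<close>
definition ordering_tau :: "'a set \<Rightarrow> ('a \<Rightarrow> 'a \<Rightarrow> bool) \<Rightarrow> 'a \<Rightarrow> 'a list \<Rightarrow> 'a list \<Rightarrow> 'a list" where
  "ordering_tau V E s \<rho> \<beta> = rev (s # filter (\<lambda>x. x \<noteq> s)
      (concat (map (\<lambda>C. filter (\<lambda>x. x \<in> C) (rev \<rho>)) (ordering_partition V E \<beta>))))"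

text \<open>sigma is an output of Ordering(G,T,s,rho), for some choice of BFS order of T.\<close>
definition ordering_output :: "'a set \<Rightarrow> ('a \<Rightarrow> 'a \<Rightarrow> bool) \<Rightarrow> ('a \<Rightarrow> 'a) \<Rightarrow> 'a \<Rightarrow> 'a list \<Rightarrow> 'a list \<Rightarrow> bool" where
  "ordering_output V E p s \<rho> \<sigma> \<longleftrightarrow>
     (\<exists>\<alpha>. is_bfs_order V (tree_edge V s p) s \<alpha> \<and>
        dfs_plus V (tree_edge V s p) (ordering_tau V E s \<rho> (rev \<alpha>)) \<sigma>)"

end

theory Submission
  imports Defs
begin

(* First, since DFS+ always continues with the rightmost
   admissible vertex of tau, the later sibling w of v was still available when sigma
   visited v, so w is left of v in tau. Second, every neighbour x of v preceding v in the
   BFS order alpha is a tree ancestor of v (T is a DFS tree), hence precedes v in sigma,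
   hence is also a neighbour of w and a tree ancestor of w. So every refining set
   containing v contains w, the class of w never ends up after the class of v, and if v
   were left of w in rho then v would be left of w in tau. *)

lemma prec_iff_decomp: "prec xs a b \<longleftrightarrow> (\<exists>ys zs. xs = ys @ a # zs \<and> b \<in> set zs)"
proof
  assume "prec xs a b"
  then obtain i j where ij: "i < j" "j < length xs" "xs ! i = a" "xs ! j = b"
    unfolding prec_def by blast
  then have "xs = take i xs @ a # drop (Suc i) xs"
    by (metis id_take_nth_drop less_trans)
  moreover have "b \<in> set (drop (Suc i) xs)"
    using ij by (auto simp: in_set_conv_nth intro!: exI[of _ "j - Suc i"])
  ultimately show "\<exists>ys zs. xs = ys @ a # zs \<and> b \<in> set zs" by blast
next
  assume "\<exists>ys zs. xs = ys @ a # zs \<and> b \<in> set zs"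
  then obtain ys zs k where "xs = ys @ a # zs" "k < length zs" "zs ! k = b"
    by (metis in_set_conv_nth)
  then show "prec xs a b"
    unfolding prec_def by (intro exI[of _ "length ys"] exI[of _ "length ys + Suc k"]) (simp add: nth_append)
qed

lemma prec_nth: "i < j \<Longrightarrow> j < length xs \<Longrightarrow> prec xs (xs ! i) (xs ! j)"
  unfolding prec_def by blast

lemma prec_nth_iff:
  "distinct xs \<Longrightarrow> i < length xs \<Longrightarrow> j < length xs \<Longrightarrow> prec xs (xs ! i) (xs ! j) \<longleftrightarrow> i < j"
  unfolding prec_def by (metis nth_eq_iff_index_eq order.strict_trans)

lemma prec_append_left: "prec xs a b \<Longrightarrow> prec (xs @ ys) a b"
  unfolding prec_iff_decomp by fastforce

lemma prec_append_right: "prec ys a b \<Longrightarrow> prec (xs @ ys) a b"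
  unfolding prec_iff_decomp by (metis append.assoc)

lemma prec_append_across: "a \<in> set xs \<Longrightarrow> b \<in> set ys \<Longrightarrow> prec (xs @ ys) a b"
  unfolding prec_iff_decomp by (metis append.assoc append_Cons in_set_conv_decomp set_append UnI2)

lemma prec_filter:
  assumes "prec xs a b" "P a" "P b"
  shows "prec (filter P xs) a b"
proof -
  obtain ys zs where "xs = ys @ a # zs" "b \<in> set zs"
    using assms(1) unfolding prec_iff_decomp by blast
  with assms(2,3) show ?thesis
    unfolding prec_iff_decomp by (intro exI[of _ "filter P ys"] exI[of _ "filter P zs"]) auto
qed

lemma prec_rev: "prec (rev xs) a b \<longleftrightarrow> prec xs b a"
proof -
  have "prec xs b a" if prec: "prec (rev xs) a b" for xs :: "'a list" and a b
  proof -
    obtain ys zs where "rev xs = ys @ a # zs" "b \<in> set zs"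
      using prec unfolding prec_iff_decomp by blast
    moreover obtain us vs where "rev zs = us @ b # vs"
      using \<open>b \<in> set zs\<close> by (metis in_set_conv_decomp set_rev)
    ultimately have "xs = us @ b # (vs @ a # rev ys)"
      by (simp add: rev_swap)
    then show ?thesis
      unfolding prec_iff_decomp by (intro exI[of _ us] exI[of _ "vs @ a # rev ys"]) simp
  qed
  then show ?thesis by (metis rev_rev_ident)
qed

lemma prec_neq: "distinct xs \<Longrightarrow> prec xs a b \<Longrightarrow> a \<noteq> b"
  unfolding prec_def by (metis nth_eq_iff_index_eq order.strict_trans less_irrefl)

lemma prec_asym: "distinct xs \<Longrightarrow> prec xs a b \<Longrightarrow> \<not> prec xs b a"
  unfolding prec_def by (metis nth_eq_iff_index_eq order.strict_trans not_less_iff_gr_or_eq)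

lemma prec_trans: "distinct xs \<Longrightarrow> prec xs a b \<Longrightarrow> prec xs b c \<Longrightarrow> prec xs a c"
  unfolding prec_def by (metis nth_eq_iff_index_eq order.strict_trans)

lemma prec_total: "a \<in> set xs \<Longrightarrow> b \<in> set xs \<Longrightarrow> a \<noteq> b \<Longrightarrow> prec xs a b \<or> prec xs b a"
  unfolding prec_def in_set_conv_nth by (metis linorder_neqE_nat)

lemma nth_in_set_take_iff:
  assumes "distinct xs" "j < length xs"
  shows "xs ! j \<in> set (take i xs) \<longleftrightarrow> j < i"
proof
  assume "xs ! j \<in> set (take i xs)"
  then obtain k where "k < i" "k < length xs" "xs ! k = xs ! j"
    by (auto simp: in_set_conv_nth)
  with assms show "j < i" by (metis nth_eq_iff_index_eq)
next
  assume "j < i"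
  with assms(2) show "xs ! j \<in> set (take i xs)" by (metis in_set_conv_nth length_take min_less_iff_conj nth_take)
qed

section \<open>Partition refinement\<close>

fun classes_disjoint :: "'a set list \<Rightarrow> bool" where
  "classes_disjoint [] = True"
| "classes_disjoint (C # Q) \<longleftrightarrow> C \<inter> \<Union>(set Q) = {} \<and> classes_disjoint Q"

text \<open>\<open>class_le Q w v\<close>: the class of \<open>w\<close> is not to the right of the class of \<open>v\<close>.\<close>
fun class_le :: "'a set list \<Rightarrow> 'a \<Rightarrow> 'a \<Rightarrow> bool" where
  "class_le [] w v = False"
| "class_le (C # Q) w v = (if w \<in> C then v \<in> C \<union> \<Union>(set Q) else v \<notin> C \<and> class_le Q w v)"

lemma refine_Cons [simp]:
  "refine (C # Q) S = (if C \<inter> S \<noteq> {} \<and> C - S \<noteq> {} then [C \<inter> S, C - S] else [C]) @ refine Q S"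
  by (simp add: refine_def)

lemma refine_Nil [simp]: "refine [] S = []"
  by (simp add: refine_def)

lemma Union_refine [simp]: "\<Union>(set (refine Q S)) = \<Union>(set Q)"
  by (induction Q) auto

lemma classes_disjoint_refine: "classes_disjoint Q \<Longrightarrow> classes_disjoint (refine Q S)"
  by (induction Q) auto

lemma class_le_refine: "class_le Q w v \<Longrightarrow> (v \<in> S \<longrightarrow> w \<in> S) \<Longrightarrow> class_le (refine Q S) w v"
  by (induction Q) auto

lemma classes_disjoint_fold_refine:
  "classes_disjoint Q \<Longrightarrow> classes_disjoint (fold (\<lambda>x Q. refine Q (S x)) xs Q)"
  by (induction xs arbitrary: Q) (auto intro: classes_disjoint_refine)

lemma classes_disjoint_ordering_partition: "classes_disjoint (ordering_partition V E \<beta>)"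
  unfolding ordering_partition_def by (rule classes_disjoint_fold_refine) simp

lemma class_le_fold_refine:
  "\<forall>x. v \<in> S x \<longrightarrow> w \<in> S x \<Longrightarrow> class_le Q w v \<Longrightarrow> class_le (fold (\<lambda>x Q. refine Q (S x)) xs Q) w v"
  by (induction xs arbitrary: Q) (auto intro: class_le_refine)

definition list_by_classes :: "'a list \<Rightarrow> 'a set list \<Rightarrow> 'a list" where
  "list_by_classes r Q = concat (map (\<lambda>C. filter (\<lambda>x. x \<in> C) r) Q)"

lemma list_by_classes_simps [simp]:
  "list_by_classes r [] = []"
  "list_by_classes r (C # Q) = filter (\<lambda>x. x \<in> C) r @ list_by_classes r Q"
  by (simp_all add: list_by_classes_def)

lemma set_list_by_classes [simp]: "set (list_by_classes r Q) = set r \<inter> \<Union>(set Q)"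
  by (induction Q) auto

lemma prec_list_by_classes: "class_le Q w v \<Longrightarrow> prec r w v \<Longrightarrow> prec (list_by_classes r Q) w v"
proof (induction Q)
  case (Cons C Q)
  have "w \<in> set r" "v \<in> set r"
    using Cons.prems(2) unfolding prec_def by auto
  show ?case
  proof (cases "w \<in> C")
    case True
    then consider "v \<in> C" | "v \<in> \<Union>(set Q)"
      using Cons.prems(1) by auto
    then show ?thesis
    proof cases
      case 1
      with True Cons.prems(2) show ?thesis by (simp add: prec_append_left prec_filter)
    next
      case 2
      with True \<open>w \<in> set r\<close> \<open>v \<in> set r\<close> show ?thesis by (auto intro!: prec_append_across)
    qed
  next
    case False
    with Cons show ?thesis by (simp add: prec_append_right)
  qed
qed simp

lemma distinct_list_by_classes: "classes_disjoint Q \<Longrightarrow> distinct r \<Longrightarrow> distinct (list_by_classes r Q)"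
  by (induction Q) auto

lemma ordering_tau_eq:
  "ordering_tau V E s \<rho> \<beta> = rev (s # filter (\<lambda>x. x \<noteq> s) (list_by_classes (rev \<rho>) (ordering_partition V E \<beta>)))"
  unfolding ordering_tau_def list_by_classes_def ..

lemma distinct_ordering_tau: "vertex_order V \<rho> \<Longrightarrow> distinct (ordering_tau V E s \<rho> \<beta>)"
  unfolding ordering_tau_eq vertex_order_def
  by (simp add: distinct_list_by_classes classes_disjoint_ordering_partition)

lemma ordering_tau_prec:
  assumes "vertex_order V \<rho>" "v \<in> V - {s}" "w \<in> V - {s}"
    and refining: "\<forall>x. E x v \<and> prec \<beta> v x \<longrightarrow> E x w \<and> prec \<beta> w x"
    and "prec \<rho> v w"
  shows "prec (ordering_tau V E s \<rho> \<beta>) v w"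
proof -
  have "class_le (ordering_partition V E \<beta>) w v"
    using class_le_fold_refine[of v "\<lambda>x. {y. E x y \<and> prec \<beta> y x}" w "[V]" \<beta>] refining assms(2,3)
    unfolding ordering_partition_def by simp
  moreover have "prec (rev \<rho>) w v"
    using assms(5) by (simp add: prec_rev)
  ultimately have "prec (list_by_classes (rev \<rho>) (ordering_partition V E \<beta>)) w v"
    by (rule prec_list_by_classes)
  then have "prec ([s] @ filter (\<lambda>x. x \<noteq> s) (list_by_classes (rev \<rho>) (ordering_partition V E \<beta>))) w v"
    using assms(2,3) by (intro prec_append_right prec_filter) auto
  then show ?thesis
    unfolding ordering_tau_eq prec_rev by simp
qed

definition tree_anc :: "'a set \<Rightarrow> 'a \<Rightarrow> ('a \<Rightarrow> 'a) \<Rightarrow> 'a \<Rightarrow> 'a \<Rightarrow> bool" where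
  "tree_anc V s p = (\<lambda>a b. b \<in> V - {s} \<and> a = p b)\<^sup>*\<^sup>*"

lemma tree_anc_parent: "v \<in> V - {s} \<Longrightarrow> tree_anc V s p (p v) v"
  unfolding tree_anc_def by (simp add: r_into_rtranclp)

lemma tree_anc_sibling:
  assumes "tree_anc V s p x v" "x \<noteq> v" "p v = p w" "w \<in> V - {s}"
  shows "tree_anc V s p x w"
proof -
  have "tree_anc V s p x (p v)"
    using assms(1,2) unfolding tree_anc_def by (blast elim: rtranclp.cases)
  then show ?thesis
    using tree_anc_parent[OF assms(4)] assms(3) unfolding tree_anc_def by (simp add: rtranclp_trans)
qed

definition tree_search_order :: "'a set \<Rightarrow> 'a \<Rightarrow> ('a \<Rightarrow> 'a) \<Rightarrow> 'a list \<Rightarrow> bool" where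
  "tree_search_order V s p ord \<longleftrightarrow> vertex_order V ord \<and> ord ! 0 = s \<and>
     (\<forall>i. 0 < i \<and> i < length ord \<longrightarrow> (\<exists>j<i. tree_edge V s p (ord ! j) (ord ! i)))"

lemma bfs_order_tree_search_order:
  "is_bfs_order V (tree_edge V s p) s \<alpha> \<Longrightarrow> tree_search_order V s p \<alpha>"
  unfolding is_bfs_order_def tree_search_order_def by blast

lemma dfs_plus_tree_search_order:
  "dfs_plus V (tree_edge V s p) \<tau> \<sigma> \<Longrightarrow> last \<tau> = s \<Longrightarrow> tree_search_order V s p \<sigma>"
  unfolding dfs_plus_def tree_search_order_def by blast

lemma tree_search_order_parent:
  assumes ord: "tree_search_order V s p ord" and "i < length ord" "ord ! i \<noteq> s"
  shows "prec ord (p (ord ! i)) (ord ! i)"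
  using assms(2,3)
proof (induction i rule: less_induct)
  case (less i)
  have "distinct ord" and "0 < i"
    using ord less.prems unfolding tree_search_order_def vertex_order_def by (auto intro: gr0I)
  then obtain j where j: "j < i" "tree_edge V s p (ord ! j) (ord ! i)"
    using ord less.prems unfolding tree_search_order_def by blast
  then consider "ord ! j \<in> V - {s}" "ord ! i = p (ord ! j)" | "ord ! j = p (ord ! i)"
    unfolding tree_edge_def by blast
  then show ?case
  proof cases
    case 1
    then have "prec ord (ord ! i) (ord ! j)"
      using less.IH[of j] j less.prems by auto
    with j less.prems \<open>distinct ord\<close> show ?thesis by (simp add: prec_nth_iff)
  next
    case 2
    with j less.prems show ?thesis by (metis prec_nth)
  qed
qed

lemma tree_search_order_anc:
  assumes ord: "tree_search_order V s p ord" and "tree_anc V s p x y"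
  shows "x = y \<or> prec ord x y"
  using assms(2) unfolding tree_anc_def
proof (induction rule: rtranclp_induct)
  case (step y z)
  have "distinct ord" "set ord = V"
    using ord unfolding tree_search_order_def vertex_order_def by auto
  then obtain i where "i < length ord" "ord ! i = z"
    using step.hyps(2) by (metis DiffD1 in_set_conv_nth)
  then have "prec ord y z"
    using tree_search_order_parent[OF ord] step.hyps(2) by auto
  with step.IH \<open>distinct ord\<close> show ?case by (auto intro: prec_trans)
qed simp

section \<open>DFS trees\<close>

lemma pos_nth: "distinct xs \<Longrightarrow> i < length xs \<Longrightarrow> pos xs (xs ! i) = i"
  unfolding pos_def by (rule Least_equality) (auto simp: nth_eq_iff_index_eq)

lemma lparent_dfs_order:
  assumes dfs: "is_dfs_order V E s \<pi>" and "i < length \<pi>" "j < i" "E (\<pi> ! j) (\<pi> ! i)"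
    and finished: "\<forall>k. j < k \<and> k < i \<longrightarrow> (\<forall>u\<in>V. E (\<pi> ! k) u \<longrightarrow> u \<in> set (take i \<pi>))"
  shows "lparent E \<pi> (\<pi> ! i) = \<pi> ! j"
proof -
  have d: "distinct \<pi>" "set \<pi> = V"
    using dfs unfolding is_dfs_order_def vertex_order_def by auto
  have "(GREATEST j'. j' < i \<and> E (\<pi> ! j') (\<pi> ! i)) = j"
  proof (rule Greatest_equality)
    fix k assume k: "k < i \<and> E (\<pi> ! k) (\<pi> ! i)"
    show "k \<le> j"
    proof (rule ccontr)
      assume "\<not> k \<le> j"
      then have "\<pi> ! i \<in> set (take i \<pi>)"
        using finished[rule_format, of k "\<pi> ! i"] k d assms(2) by auto
      with d assms(2) show False by (simp add: nth_in_set_take_iff)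
    qed
  qed (use assms in simp)
  with d assms(2) show ?thesis
    unfolding lparent_def by (simp add: pos_nth)
qed

text \<open>In a DFS, a vertex with a neighbour visited at or after \<open>\<pi> ! b\<close> is still unfinished
  when \<open>\<pi> ! b\<close> is visited, so it lies on the tree path to \<open>\<pi> ! b\<close>.\<close>
lemma dfs_ltree_anc_of_later_neighbour:
  assumes dfs: "is_dfs_order V E s \<pi>" and par: "\<forall>v\<in>V - {s}. p v = lparent E \<pi> v"
  shows "a < b \<Longrightarrow> b \<le> c \<Longrightarrow> c < length \<pi> \<Longrightarrow> E (\<pi> ! a) (\<pi> ! c) \<Longrightarrow> tree_anc V s p (\<pi> ! a) (\<pi> ! b)"
proof (induction b rule: less_induct)
  case (less b)
  have d: "distinct \<pi>" "set \<pi> = V" "\<pi> ! 0 = s"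
    using dfs unfolding is_dfs_order_def vertex_order_def by auto
  have b: "0 < b" "b < length \<pi>" "0 < length \<pi>"
    using less.prems by auto
  then obtain j where j: "j < b" "E (\<pi> ! j) (\<pi> ! b)"
    and finished: "\<forall>k. j < k \<and> k < b \<longrightarrow> (\<forall>u\<in>V. E (\<pi> ! k) u \<longrightarrow> u \<in> set (take b \<pi>))"
    using dfs unfolding is_dfs_order_def by blast
  from b have "\<pi> ! b \<noteq> \<pi> ! 0"
    using nth_eq_iff_index_eq[OF d(1)] by simp
  with d \<open>b < length \<pi>\<close> have "\<pi> ! b \<in> V - {s}"
    by auto
  moreover have "p (\<pi> ! b) = \<pi> ! j"
    using par calculation lparent_dfs_order[OF dfs _ j finished] less.prems by simp
  ultimately have parent: "tree_anc V s p (\<pi> ! j) (\<pi> ! b)"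
    by (metis tree_anc_parent)
  consider "j < a" | "j = a" | "a < j" by linarith
  then show ?case
  proof cases
    case 1
    then have "\<pi> ! c \<in> set (take b \<pi>)"
      using finished less.prems d by auto
    with less.prems d show ?thesis by (simp add: nth_in_set_take_iff)
  next
    case 3
    then have "tree_anc V s p (\<pi> ! a) (\<pi> ! j)"
      using less.IH[of j] j less.prems by simp
    then show ?thesis
      using parent unfolding tree_anc_def by (rule rtranclp_trans)
  qed (use parent in simp)
qed

lemma dfs_ltree_edge_anc:
  assumes "simple_graph V E" "is_dfs_ltree V E s p" "E x y"
  shows "tree_anc V s p x y \<or> tree_anc V s p y x"
proof -
  obtain \<pi> where dfs: "is_dfs_order V E s \<pi>" and par: "\<forall>v\<in>V - {s}. p v = lparent E \<pi> v"
    using assms(2) unfolding is_dfs_ltree_def by blast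
  have "set \<pi> = V"
    using dfs unfolding is_dfs_order_def vertex_order_def by auto
  moreover have "x \<in> V" "y \<in> V" "E y x" "x \<noteq> y"
    using assms(1,3) unfolding simple_graph_def by blast+
  ultimately obtain a c where "a < length \<pi>" "\<pi> ! a = x" "c < length \<pi>" "\<pi> ! c = y" "a \<noteq> c"
    by (metis in_set_conv_nth)
  with assms(3) \<open>E y x\<close> show ?thesis
    using dfs_ltree_anc_of_later_neighbour[OF dfs par, of a c c] dfs_ltree_anc_of_later_neighbour[OF dfs par, of c a a]
    by (metis le_refl linorder_neqE_nat)
qed

lemma dfs_plus_sibling_prec:
  assumes dp: "dfs_plus V (tree_edge V s p) \<tau> \<sigma>" and "last \<tau> = s"
    and v: "v \<in> V - {s}" and w: "w \<in> V - {s}" and "p v = p w" and "prec \<sigma> v w"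
  shows "prec \<tau> w v"
proof -
  have search: "tree_search_order V s p \<sigma>"
    using dp assms(2) by (rule dfs_plus_tree_search_order)
  then have d: "distinct \<sigma>" "\<sigma> ! 0 = s"
    unfolding tree_search_order_def vertex_order_def by auto
  obtain i k where ik: "i < k" "k < length \<sigma>" "\<sigma> ! i = v" "\<sigma> ! k = w"
    using assms(6) unfolding prec_def by blast
  with v d have "0 < i" "i < length \<sigma>"
    by (auto intro: gr0I)
  then obtain j where j: "j < i" "tree_edge V s p (\<sigma> ! j) v"
    and rightmost: "\<forall>u\<in>V. tree_edge V s p (\<sigma> ! j) u \<and> u \<notin> set (take i \<sigma>) \<longrightarrow> u = v \<or> prec \<tau> u v"
    using dp ik(3) unfolding dfs_plus_def by blast
  have "\<sigma> ! j = p v"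
  proof (rule ccontr)
    assume "\<sigma> ! j \<noteq> p v"
    then have "\<sigma> ! j \<noteq> s" "v = p (\<sigma> ! j)"
      using j(2) unfolding tree_edge_def by auto
    then have "prec \<sigma> v (\<sigma> ! j)"
      using tree_search_order_parent[OF search, of j] j ik by simp
    moreover have "j < length \<sigma>"
      using j ik by simp
    ultimately have "i < j"
      using prec_nth_iff[OF d(1) ik(1)[THEN order.strict_trans, OF ik(2)], of j] ik(3) by simp
    with j show False by simp
  qed
  then have "tree_edge V s p (\<sigma> ! j) w"
    using w assms(5) unfolding tree_edge_def by simp
  moreover have "w \<notin> set (take i \<sigma>)"
    using ik nth_in_set_take_iff[OF d(1) ik(2), of i] by simp
  ultimately have "w = v \<or> prec \<tau> w v"
    using rightmost w by simp
  moreover have "w \<noteq> v"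
    using prec_neq[OF d(1) assms(6)] by simp
  ultimately show ?thesis
    by simp
qed

lemma earlier_neighbour_tree_anc:
  assumes "simple_graph V E" "is_dfs_ltree V E s p" "tree_search_order V s p \<alpha>"
    and "E x v" "prec \<alpha> x v"
  shows "tree_anc V s p x v"
proof -
  have "distinct \<alpha>"
    using assms(3) unfolding tree_search_order_def vertex_order_def by simp
  then have "x \<noteq> v" "\<not> prec \<alpha> v x"
    using assms(5) by (rule prec_neq, rule prec_asym)
  then have "\<not> tree_anc V s p v x"
    using tree_search_order_anc[OF assms(3), of v x] by auto
  then show ?thesis
    using dfs_ltree_edge_anc[OF assms(1,2,4)] by blast
qed

lemma earlier_neighbour_of_sibling:
  assumes G: "simple_graph V E" "is_dfs_ltree V E s p"
    and \<alpha>: "tree_search_order V s p \<alpha>" and \<sigma>: "tree_search_order V s p \<sigma>"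
    and "w \<in> V - {s}" "p v = p w" "prec \<sigma> v w"
    and same_nbhd: "\<forall>x. prec \<sigma> x v \<longrightarrow> (E v x \<longleftrightarrow> E w x)"
    and "E x v" "prec \<alpha> x v"
  shows "E x w \<and> prec \<alpha> x w"
proof -
  have "distinct \<sigma>" "distinct \<alpha>"
    using \<alpha> \<sigma> unfolding tree_search_order_def vertex_order_def by auto
  have anc_v: "tree_anc V s p x v"
    using earlier_neighbour_tree_anc[OF G \<alpha>] assms(9,10) .
  have "x \<noteq> v"
    using prec_neq[OF \<open>distinct \<alpha>\<close> assms(10)] .
  have anc_w: "tree_anc V s p x w"
    using tree_anc_sibling[OF anc_v \<open>x \<noteq> v\<close> assms(6,5)] .
  have "prec \<sigma> x v"
    using tree_search_order_anc[OF \<sigma> anc_v] \<open>x \<noteq> v\<close> by blast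
  then have "E x w"
    using same_nbhd assms(9) G(1) unfolding simple_graph_def by blast
  moreover have "x \<noteq> w"
    using prec_asym[OF \<open>distinct \<sigma>\<close> assms(7)] \<open>prec \<sigma> x v\<close> by auto
  then have "prec \<alpha> x w"
    using tree_search_order_anc[OF \<alpha> anc_w] by blast
  ultimately show ?thesis ..
qed

theorem lemma10:
  fixes V :: "'a set" and E :: "'a \<Rightarrow> 'a \<Rightarrow> bool" and s :: 'a and p :: "'a \<Rightarrow> 'a"
    and \<rho> \<sigma> :: "'a list" and v w :: 'a
  assumes "simple_graph V E" and "connected_graph V E" and "s \<in> V"
    and "is_dfs_ltree V E s p"
    and "vertex_order V \<rho>" and "last \<rho> = s"
    and "ordering_output V E p s \<rho> \<sigma>"
    and "v \<in> V - {s}" and "w \<in> V - {s}" and "prec \<sigma> v w"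
    and "p v = p w"
    and "\<forall>x. prec \<sigma> x v \<longrightarrow> (E v x \<longleftrightarrow> E w x)"
  shows "prec \<rho> w v"
proof (rule ccontr)
  obtain \<alpha> where bfs: "is_bfs_order V (tree_edge V s p) s \<alpha>"
    and dp: "dfs_plus V (tree_edge V s p) (ordering_tau V E s \<rho> (rev \<alpha>)) \<sigma>"
    using assms(7) unfolding ordering_output_def by blast
  let ?\<tau> = "ordering_tau V E s \<rho> (rev \<alpha>)"
  have distinct_\<tau>: "distinct ?\<tau>"
    using assms(5) by (rule distinct_ordering_tau)
  have last_\<tau>: "last ?\<tau> = s"
    unfolding ordering_tau_def by (simp add: last_rev)
  have "prec ?\<tau> w v"
    using dfs_plus_sibling_prec[OF dp last_\<tau> assms(8,9,11,10)] .
  have refining: "\<forall>x. E x v \<and> prec (rev \<alpha>) v x \<longrightarrow> E x w \<and> prec (rev \<alpha>) w x"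
    using earlier_neighbour_of_sibling[OF assms(1,4) bfs_order_tree_search_order[OF bfs]
        dfs_plus_tree_search_order[OF dp last_\<tau>] assms(9,11,10,12)]
    by (simp add: prec_rev)
  assume "\<not> prec \<rho> w v"
  moreover have "v \<noteq> w"
    using prec_neq[OF distinct_\<tau> \<open>prec ?\<tau> w v\<close>] by simp
  ultimately have "prec \<rho> v w"
    using prec_total[of v \<rho> w] assms(5,8,9) unfolding vertex_order_def by simp
  then have "prec ?\<tau> v w"
    using ordering_tau_prec[OF assms(5,8,9) refining] by simp
  with \<open>prec ?\<tau> w v\<close> show False
    using prec_asym[OF distinct_\<tau>] by simp
qed

end
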